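(* Let $f$ be either \textsc{OneMinMax} or \textsc{LOTZ}, and let $\mathrm{score}(x,P)$ be a diversity-favouring measure on $\{0,1\}^n\setminus\{0^n,1^n\}$ with respect to $f$. Assume the population $P$ is a subset of the Pareto set, $P\subseteq X^*$. Sort $P$ by non-increasing $\mathrm{score}(x,P)$ and consider a parent selection mechanism based on $\mathrm{score}$ such that $r_i$ is the probability of selecting the $i$-th element of $P$ in this sorted sequence. Then, unless $P$ already covers the Pareto front (i.e. $f(P)=F^*$), the probability of selecting a good individual is at least $\min\{r_1,r_2,r_3\}$.
   Context: Search space $\{0,1\}^n$; objectives maximised. $\textsc{OneMinMax}(x)=(\sum_ix_i,\,n-\sum_ix_i)$; $\textsc{LOTZ}(x)=(\mathrm{LO}(x),\mathrm{TZ}(x))$ with $\mathrm{LO}$ the number of leading ones and $\mathrm{TZ}$ the number of trailing zeros. Dominance: $y$ dominates $x$ if $f_i(y)\ge f_i(x)$ for all $i$, strictly for some $i$. Pareto set $X^*$ (non-dominated points; all of $\{0,1\}^n$ for \textsc{OneMinMax}, $\{1^i0^{n-i}\}$ for \textsc{LOTZ}), Pareto front $F^*=f(X^* )$. Populations contain points with distinct objective vectors. Good: w.r.t. $P$, $x\in P\cap X^*$ is good if some Hamming neighbour $y$ of $x$ satisfies $y\in X^*$ and $f(y)\notin f(P)$; otherwise bad. A measure is diversity-favouring on $S$ (w.r.t. $f$) if for every population $P$ and all $x,y\in P\cap X^*\cap S$ with $x$ bad and $y$ good, $\mathrm{score}(x,P)<\mathrm{score}(y,P)$. *)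

theory Defs
  imports Complex_Main
begin

text \<open>Bit strings of length n are boolean lists of length n (True = 1).\<close>

definition cube :: "nat \<Rightarrow> bool list set" where
  "cube n = {x. length x = n}"

definition oneminmax :: "bool list \<Rightarrow> nat \<times> nat" where
  "oneminmax x = (length (filter id x), length (filter Not x))"

definition LO :: "bool list \<Rightarrow> nat" where
  "LO x = length (takeWhile id x)"

definition TZ :: "bool list \<Rightarrow> nat" where
  "TZ x = length (takeWhile Not (rev x))"

definition lotz :: "bool list \<Rightarrow> nat \<times> nat" where
  "lotz x = (LO x, TZ x)"

definition dominates :: "(bool list \<Rightarrow> nat \<times> nat) \<Rightarrow> bool list \<Rightarrow> bool list \<Rightarrow> bool" where
  "dominates f y x \<longleftrightarrow>
     fst (f y) \<ge> fst (f x) \<and> snd (f y) \<ge> snd (f x) \<and>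
     (fst (f y) > fst (f x) \<or> snd (f y) > snd (f x))"

definition pareto_set :: "nat \<Rightarrow> (bool list \<Rightarrow> nat \<times> nat) \<Rightarrow> bool list set" where
  "pareto_set n f = {x \<in> cube n. \<not> (\<exists>y \<in> cube n. dominates f y x)}"

definition pareto_front :: "nat \<Rightarrow> (bool list \<Rightarrow> nat \<times> nat) \<Rightarrow> (nat \<times> nat) set" where
  "pareto_front n f = f ` pareto_set n f"

definition hamming_neighbour :: "bool list \<Rightarrow> bool list \<Rightarrow> bool" where
  "hamming_neighbour x y \<longleftrightarrow>
     length x = length y \<and> card {i. i < length x \<and> x ! i \<noteq> y ! i} = 1"

definition population :: "nat \<Rightarrow> (bool list \<Rightarrow> nat \<times> nat) \<Rightarrow> bool list set \<Rightarrow> bool" where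
  "population n f P \<longleftrightarrow> P \<subseteq> cube n \<and> finite P \<and> P \<noteq> {} \<and> inj_on f P"

definition good :: "nat \<Rightarrow> (bool list \<Rightarrow> nat \<times> nat) \<Rightarrow> bool list set \<Rightarrow> bool list \<Rightarrow> bool" where
  "good n f P x \<longleftrightarrow> x \<in> P \<inter> pareto_set n f \<and>
     (\<exists>y. hamming_neighbour x y \<and> y \<in> pareto_set n f \<and> f y \<notin> f ` P)"

definition bad :: "nat \<Rightarrow> (bool list \<Rightarrow> nat \<times> nat) \<Rightarrow> bool list set \<Rightarrow> bool list \<Rightarrow> bool" where
  "bad n f P x \<longleftrightarrow> x \<in> P \<inter> pareto_set n f \<and> \<not> good n f P x"

definition diversity_favouring ::
  "nat \<Rightarrow> (bool list \<Rightarrow> nat \<times> nat) \<Rightarrow> bool list set \<Rightarrow> (bool list \<Rightarrow> bool list set \<Rightarrow> real) \<Rightarrow> bool" where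
  "diversity_favouring n f S score \<longleftrightarrow>
     (\<forall>P. population n f P \<longrightarrow>
        (\<forall>x y. x \<in> P \<inter> pareto_set n f \<inter> S \<longrightarrow> y \<in> P \<inter> pareto_set n f \<inter> S \<longrightarrow>
               bad n f P x \<longrightarrow> good n f P y \<longrightarrow> score x P < score y P))"

end

theory Submission
  imports Defs
begin

text \<open>For both objectives the Pareto set is graded by the first objective: a Pareto optimal
  point of level k has objective vector (k, n - k), and it has Pareto optimal Hamming
  neighbours on the adjacent levels k - 1 and k + 1 (within 0..n). If P misses a level m of
  the front, the member of P whose level is closest to m from one side has an unoccupied
  neighbouring level, so it is good. Starting that search from an occupied level strictly
  between 0 and n, which exists once P has more than three members, the good member found is
  neither 0^n nor 1^n. Among the three best-ranked individuals one is neither 0^n nor 1^n,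
  and if it were bad, diversity favouring would rank it strictly below that good member.\<close>

lemma exists_notin_image_if_card_less:
  assumes "finite E" "card E < card A" "inj_on g A"
  shows "\<exists>a\<in>A. g a \<notin> E"
proof (rule ccontr)
  assume "\<not> ?thesis"
  then have "g ` A \<subseteq> E" by blast
  then have "card (g ` A) \<le> card E" using assms(1) by (intro card_mono)
  then show False using assms by (simp add: card_image)
qed

lemma exists_Suc_notin_between:
  fixes L :: "nat set"
  assumes "k \<le> m" "m \<notin> L"
  shows "k \<in> L \<Longrightarrow> \<exists>j\<in>L. k \<le> j \<and> j < m \<and> Suc j \<notin> L"
  using assms(1)
proof (induction k rule: inc_induct)
  case base
  with assms(2) show ?case by blast
next
  case (step i)
  then show ?case by (cases "Suc i \<in> L") (auto intro: Suc_leD)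
qed

lemma exists_pred_notin_between:
  fixes L :: "nat set"
  assumes "m \<le> k" "m \<notin> L"
  shows "k \<in> L \<Longrightarrow> \<exists>j\<in>L. m < j \<and> j \<le> k \<and> j - 1 \<notin> L"
  using assms(1)
proof (induction k rule: dec_induct)
  case base
  with assms(2) show ?case by blast
next
  case (step i)
  show ?case
  proof (cases "i \<in> L")
    case True
    with step show ?thesis by (auto intro: le_SucI)
  next
    case False
    with step show ?thesis by (intro bexI[of _ "Suc i"]) auto
  qed
qed

locale graded_pareto_set =
  fixes n :: nat and f :: "bool list \<Rightarrow> nat \<times> nat"
  assumes pareto_set_value:
      "x \<in> pareto_set n f \<Longrightarrow> fst (f x) \<le> n \<and> snd (f x) = n - fst (f x)"
    and pareto_set_step_up: "x \<in> pareto_set n f \<Longrightarrow> fst (f x) < n \<Longrightarrow>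
      \<exists>y\<in>pareto_set n f. hamming_neighbour x y \<and> fst (f y) = Suc (fst (f x))"
    and pareto_set_step_down: "x \<in> pareto_set n f \<Longrightarrow> 0 < fst (f x) \<Longrightarrow>
      \<exists>y\<in>pareto_set n f. hamming_neighbour x y \<and> Suc (fst (f y)) = fst (f x)"
    and fst_zeros: "fst (f (replicate n False)) = 0"
    and fst_ones: "fst (f (replicate n True)) = n"

context graded_pareto_set
begin

abbreviation level :: "bool list \<Rightarrow> nat" where
  "level x \<equiv> fst (f x)"

lemma f_eq_iff_level_eq:
  "x \<in> pareto_set n f \<Longrightarrow> y \<in> pareto_set n f \<Longrightarrow> f x = f y \<longleftrightarrow> level x = level y"
  using pareto_set_value[of x] pareto_set_value[of y] by (auto simp: prod_eq_iff)

lemma inj_on_level: "P \<subseteq> pareto_set n f \<Longrightarrow> inj_on f P \<Longrightarrow> inj_on level P"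
  by (auto simp: inj_on_def f_eq_iff_level_eq subset_iff)

lemma exists_level_notin_if_not_covered:
  assumes "P \<subseteq> pareto_set n f" "f ` P \<noteq> pareto_front n f"
  shows "\<exists>m\<le>n. m \<notin> level ` P"
proof (rule ccontr)
  assume "\<not> ?thesis"
  then have levels: "level x \<in> level ` P" if "x \<in> pareto_set n f" for x
    using that pareto_set_value by auto
  have "pareto_front n f \<subseteq> f ` P"
  proof
    fix v assume "v \<in> pareto_front n f"
    then obtain x where x: "x \<in> pareto_set n f" "v = f x" by (auto simp: pareto_front_def)
    then obtain z where z: "z \<in> P" "level z = level x" using levels by force
    then have "f z = f x" using assms(1) x f_eq_iff_level_eq by blast
    with z x show "v \<in> f ` P" by (metis image_eqI)
  qed
  moreover have "f ` P \<subseteq> pareto_front n f" using assms(1) by (auto simp: pareto_front_def)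
  ultimately show False using assms(2) by blast
qed

lemma good_if_neighbouring_level_notin:
  assumes "P \<subseteq> pareto_set n f" "x \<in> P" "k \<le> n" "k \<notin> level ` P"
    and "k = Suc (level x) \<or> Suc k = level x"
  shows "good n f P x"
proof -
  have x: "x \<in> pareto_set n f" using assms(1,2) by blast
  obtain y where y: "y \<in> pareto_set n f" "hamming_neighbour x y" "level y = k"
    using assms(3,5) pareto_set_step_up[OF x] pareto_set_step_down[OF x] by fastforce
  have "f y \<notin> f ` P"
  proof
    assume "f y \<in> f ` P"
    then obtain z where "z \<in> P" "f z = f y" by auto
    with y assms(4) show False by (metis image_eqI)
  qed
  with x y assms(2) show ?thesis by (auto simp: good_def)
qed

lemma exists_good_towards_missing_level:
  assumes "P \<subseteq> pareto_set n f" "x\<^sub>0 \<in> P" "m \<le> n" "m \<notin> level ` P"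
  shows "\<exists>x\<in>P. good n f P x \<and> min (level x\<^sub>0) m \<le> level x \<and> level x \<le> max (level x\<^sub>0) m"
proof (cases "level x\<^sub>0 < m")
  case True
  then obtain j where j: "j \<in> level ` P" "level x\<^sub>0 \<le> j" "j < m" "Suc j \<notin> level ` P"
    using exists_Suc_notin_between[of "level x\<^sub>0" m "level ` P"] assms(2,4) by auto
  then obtain x where "x \<in> P" "level x = j" by blast
  with j assms show ?thesis
    by (intro bexI[of _ x] conjI good_if_neighbouring_level_notin[of P x "Suc j"]) auto
next
  case False
  with assms(2,4) have "m < level x\<^sub>0" by (metis image_eqI linorder_neqE_nat)
  then obtain j where j: "j \<in> level ` P" "m < j" "j \<le> level x\<^sub>0" "j - 1 \<notin> level ` P"
    using exists_pred_notin_between[of m "level x\<^sub>0" "level ` P"] assms(2,4) by auto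
  then obtain x where "x \<in> P" "level x = j" by blast
  moreover have "level x\<^sub>0 \<le> n" using assms(1,2) pareto_set_value by blast
  ultimately show ?thesis using j assms
    by (intro bexI[of _ x] conjI good_if_neighbouring_level_notin[of P x "j - 1"]) auto
qed

lemma exists_good:
  assumes "population n f P" "P \<subseteq> pareto_set n f" "f ` P \<noteq> pareto_front n f"
  shows "\<exists>x\<in>P. good n f P x \<and> (x \<notin> {replicate n False, replicate n True} \<or> card P \<le> 3)"
proof -
  obtain m where m: "m \<le> n" "m \<notin> level ` P"
    using exists_level_notin_if_not_covered assms(2,3) by blast
  obtain x\<^sub>0 where x\<^sub>0: "x\<^sub>0 \<in> P" "card P \<le> 3 \<or> level x\<^sub>0 \<notin> {0, n}"
  proof (cases "card P \<le> 3")
    case True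
    with assms(1) that show ?thesis by (auto simp: population_def)
  next
    case False
    then have "card {0, n} < card P" by (simp add: card_insert_if)
    moreover have "inj_on level P"
      using assms(1,2) inj_on_level by (simp add: population_def)
    ultimately show ?thesis
      using exists_notin_image_if_card_less[of "{0, n}" P level] that by blast
  qed
  obtain x where x: "x \<in> P" "good n f P x" "min (level x\<^sub>0) m \<le> level x" "level x \<le> max (level x\<^sub>0) m"
    using exists_good_towards_missing_level[OF assms(2) x\<^sub>0(1) m] by blast
  have "level x\<^sub>0 \<le> n" "level x \<noteq> m" using assms(2) x\<^sub>0(1) x(1) m(2) pareto_set_value by blast+
  with x\<^sub>0(2) x(3,4) m(1) have "card P \<le> 3 \<or> level x \<notin> {0, n}" by auto
  with x(1,2) show ?thesis using fst_zeros fst_ones by auto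
qed

end

lemma good_among_top_ranked:
  assumes df: "diversity_favouring n f (cube n - E) score"
    and E: "finite E" "card E < t"
    and pop: "population n f P" and pareto: "P \<subseteq> pareto_set n f"
    and \<sigma>: "bij_betw \<sigma> {1..card P} P"
    and sorted: "\<And>i j. 1 \<le> i \<Longrightarrow> i \<le> j \<Longrightarrow> j \<le> card P \<Longrightarrow> score (\<sigma> i) P \<ge> score (\<sigma> j) P"
    and x: "x \<in> P" "good n f P x" "x \<notin> E \<or> card P \<le> t"
  shows "\<exists>i\<in>{1..t}. i \<le> card P \<and> good n f P (\<sigma> i)"
proof -
  obtain k where k: "k \<in> {1..card P}" "\<sigma> k = x"
    using \<sigma> x(1) by (metis bij_betw_iff_bijections)
  show ?thesis
  proof (cases "k \<le> t")
    case True
    with k x(2) show ?thesis by auto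
  next
    case False
    then have top: "{1..t} \<subseteq> {1..card P}" and "x \<notin> E" using k x(3) by auto
    have "inj_on \<sigma> {1..t}" using \<sigma> top by (meson bij_betw_def inj_on_subset)
    then obtain i where i: "i \<in> {1..t}" "\<sigma> i \<notin> E"
      using exists_notin_image_if_card_less[of E "{1..t}" \<sigma>] E by auto
    have "\<sigma> i \<in> P" using \<sigma> i(1) top bij_betwE by blast
    have "good n f P (\<sigma> i)"
    proof (rule ccontr)
      assume "\<not> good n f P (\<sigma> i)"
      moreover have "pareto_set n f \<subseteq> cube n" by (auto simp: pareto_set_def)
      ultimately have "\<sigma> i \<in> P \<inter> pareto_set n f \<inter> (cube n - E)" "bad n f P (\<sigma> i)"
        and "x \<in> P \<inter> pareto_set n f \<inter> (cube n - E)"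
        using \<open>\<sigma> i \<in> P\<close> i(2) x(1) \<open>x \<notin> E\<close> pareto by (auto simp: bad_def)
      then have "score (\<sigma> i) P < score x P"
        using df x(2) pop unfolding diversity_favouring_def by blast
      moreover have "score (\<sigma> k) P \<le> score (\<sigma> i) P"
        using sorted[of i k] i(1) k(1) False by simp
      ultimately show False using k(2) by simp
    qed
    with i(1) top show ?thesis by auto
  qed
qed

lemma hamming_neighbour_sym:
  assumes "hamming_neighbour x y"
  shows "hamming_neighbour y x"
proof -
  have diff: "{i. i < length y \<and> y ! i \<noteq> x ! i} = {i. i < length x \<and> x ! i \<noteq> y ! i}"
    using assms by (auto simp: hamming_neighbour_def)
  from assms show ?thesis unfolding hamming_neighbour_def diff by auto
qed

lemma hamming_neighbour_list_update:
  assumes "i < length x" "x ! i \<noteq> b"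
  shows "hamming_neighbour x (x[i := b])"
proof -
  have "{j. j < length x \<and> x ! j \<noteq> x[i := b] ! j} = {i}"
    using assms by (auto simp: nth_list_update)
  then show ?thesis by (simp add: hamming_neighbour_def)
qed

lemma length_filter_list_update:
  "i < length xs \<Longrightarrow>
     length (filter P (xs[i := v])) + (if P (xs ! i) then 1 else 0)
       = length (filter P xs) + (if P v then 1 else 0)"
proof (induction xs arbitrary: i)
  case Nil
  then show ?case by simp
next
  case (Cons a xs)
  then show ?case by (cases i) auto
qed

lemma fst_plus_snd_oneminmax: "fst (oneminmax x) + snd (oneminmax x) = length x"
  using sum_length_filter_compl[of id x] by (simp add: oneminmax_def comp_def)

lemma pareto_set_oneminmax: "pareto_set n oneminmax = cube n"
proof -
  have "\<not> dominates oneminmax y x" if "x \<in> cube n" "y \<in> cube n" for x y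
    using that fst_plus_snd_oneminmax[of x] fst_plus_snd_oneminmax[of y]
    by (auto simp: dominates_def cube_def)
  then show ?thesis by (auto simp: pareto_set_def)
qed

lemma fst_oneminmax_flip:
  assumes "i < length x" "x ! i \<noteq> b"
  shows "fst (oneminmax (x[i := b])) + (if b then 0 else 1) = fst (oneminmax x) + (if b then 1 else 0)"
  using length_filter_list_update[OF assms(1), of id b] assms(2) by (auto simp: oneminmax_def)

lemma graded_pareto_set_oneminmax: "graded_pareto_set n oneminmax"
proof
  fix x assume "x \<in> pareto_set n oneminmax"
  then have len: "length x = n" by (simp add: pareto_set_oneminmax cube_def)
  show "fst (oneminmax x) \<le> n \<and> snd (oneminmax x) = n - fst (oneminmax x)"
    using fst_plus_snd_oneminmax[of x] len by simp
  have flip: "\<exists>y\<in>pareto_set n oneminmax. hamming_neighbour x y \<and>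
      fst (oneminmax y) + (if b then 0 else 1) = fst (oneminmax x) + (if b then 1 else 0)"
    if flipped: "(\<not> b) \<in> set x" for b
  proof -
    obtain i where "i < length x" "x ! i = (\<not> b)" using flipped by (auto simp: in_set_conv_nth)
    with len show ?thesis
      by (intro bexI[of _ "x[i := b]"] conjI hamming_neighbour_list_update fst_oneminmax_flip)
        (auto simp: pareto_set_oneminmax cube_def)
  qed
  show "\<exists>y\<in>pareto_set n oneminmax. hamming_neighbour x y \<and>
      fst (oneminmax y) = Suc (fst (oneminmax x))" if "fst (oneminmax x) < n"
  proof -
    have "filter id x \<noteq> x" using that len by (auto simp: oneminmax_def)
    then have "False \<in> set x" by (metis (full_types) filter_True id_apply)
    then show ?thesis using flip[of True] by simp
  qed
  show "\<exists>y\<in>pareto_set n oneminmax. hamming_neighbour x y \<and>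
      Suc (fst (oneminmax y)) = fst (oneminmax x)" if "0 < fst (oneminmax x)"
  proof -
    have "True \<in> set x"
      using that by (auto simp: oneminmax_def filter_empty_conv)
    then show ?thesis using flip[of False] by simp
  qed
qed (simp_all add: oneminmax_def)

definition ones_zeros :: "nat \<Rightarrow> nat \<Rightarrow> bool list" where
  "ones_zeros n i = replicate i True @ replicate (n - i) False"

lemma length_ones_zeros: "i \<le> n \<Longrightarrow> length (ones_zeros n i) = n"
  by (simp add: ones_zeros_def)

lemma nth_ones_zeros: "i \<le> n \<Longrightarrow> j < n \<Longrightarrow> ones_zeros n i ! j = (j < i)"
  by (auto simp: ones_zeros_def nth_append)

lemma takeWhile_replicate_append:
  "takeWhile P (replicate k a @ ys) = (if k = 0 \<or> P a then replicate k a @ takeWhile P ys else [])"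
  by (induction k) auto

lemma LO_ones_zeros: "i \<le> n \<Longrightarrow> LO (ones_zeros n i) = i"
  by (simp add: LO_def ones_zeros_def takeWhile_replicate_append)

lemma TZ_ones_zeros: "TZ (ones_zeros n i) = n - i"
  by (simp add: TZ_def ones_zeros_def takeWhile_replicate_append)

lemma LO_nth: "j < LO x \<Longrightarrow> x ! j"
  unfolding LO_def by (metis id_apply nth_mem set_takeWhileD takeWhile_nth)

lemma TZ_nth:
  assumes "length x - TZ x \<le> j" "j < length x"
  shows "\<not> x ! j"
proof -
  have "length x - Suc j < length (takeWhile Not (rev x))"
    using assms by (simp add: TZ_def)
  then have "\<not> rev x ! (length x - Suc j)"
    by (metis nth_mem set_takeWhileD takeWhile_nth)
  with assms(2) show ?thesis by (simp add: rev_nth)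
qed

lemma LO_plus_TZ_le: "LO x + TZ x \<le> length x"
proof (rule ccontr)
  assume "\<not> ?thesis"
  moreover have "LO x \<le> length x"
    unfolding LO_def by (rule length_takeWhile_le)
  moreover have "TZ x \<le> length x"
    unfolding TZ_def using length_takeWhile_le[of Not "rev x"] by simp
  ultimately have "x ! (LO x - 1)" "\<not> x ! (LO x - 1)"
    by (intro LO_nth TZ_nth; linarith)+
  then show False by simp
qed

lemma ones_zeros_LO_if_LO_plus_TZ_eq:
  assumes "LO x + TZ x = length x"
  shows "ones_zeros (length x) (LO x) = x"
proof (rule nth_equalityI)
  show "length (ones_zeros (length x) (LO x)) = length x"
    using assms by (simp add: length_ones_zeros)
  show "ones_zeros (length x) (LO x) ! j = x ! j" if "j < length (ones_zeros (length x) (LO x))" for j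
    using that assms LO_nth[of j x] TZ_nth[of x j]
    by (cases "j < LO x") (simp_all add: length_ones_zeros nth_ones_zeros)
qed

lemma pareto_set_lotz: "pareto_set n lotz = ones_zeros n ` {..n}"
proof (intro equalityI subsetI)
  fix x assume x: "x \<in> pareto_set n lotz"
  then have len: "length x = n" by (simp add: pareto_set_def cube_def)
  have "LO x + TZ x = n"
  proof (rule ccontr)
    assume "LO x + TZ x \<noteq> n"
    then have "LO x + TZ x < n" using LO_plus_TZ_le[of x] len by simp
    then have "dominates lotz (ones_zeros n (LO x)) x"
      by (auto simp: dominates_def lotz_def LO_ones_zeros TZ_ones_zeros)
    moreover have "ones_zeros n (LO x) \<in> cube n"
      using LO_plus_TZ_le[of x] len by (simp add: cube_def length_ones_zeros)
    ultimately show False using x by (auto simp: pareto_set_def)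
  qed
  with len have "x = ones_zeros n (LO x)" "LO x \<le> n"
    using ones_zeros_LO_if_LO_plus_TZ_eq[of x] by auto
  then show "x \<in> ones_zeros n ` {..n}" by blast
next
  fix x assume "x \<in> ones_zeros n ` {..n}"
  then obtain i where i: "i \<le> n" "x = ones_zeros n i" by blast
  have "\<not> dominates lotz y x" if "y \<in> cube n" for y
    using that i LO_plus_TZ_le[of y]
    by (auto simp: dominates_def lotz_def cube_def LO_ones_zeros TZ_ones_zeros)
  with i show "x \<in> pareto_set n lotz"
    by (simp add: pareto_set_def cube_def length_ones_zeros)
qed

lemma hamming_neighbour_ones_zeros_Suc:
  assumes "i < n"
  shows "hamming_neighbour (ones_zeros n i) (ones_zeros n (Suc i))"
proof -
  have "{j. j < length (ones_zeros n i) \<and> ones_zeros n i ! j \<noteq> ones_zeros n (Suc i) ! j} = {i}"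
    using assms by (auto simp: length_ones_zeros nth_ones_zeros)
  with assms show ?thesis by (simp add: hamming_neighbour_def length_ones_zeros)
qed

lemma graded_pareto_set_lotz: "graded_pareto_set n lotz"
proof
  fix x assume "x \<in> pareto_set n lotz"
  then obtain i where i: "i \<le> n" "x = ones_zeros n i" by (auto simp: pareto_set_lotz)
  then show "fst (lotz x) \<le> n \<and> snd (lotz x) = n - fst (lotz x)"
    by (simp add: lotz_def LO_ones_zeros TZ_ones_zeros)
  show "\<exists>y\<in>pareto_set n lotz. hamming_neighbour x y \<and> fst (lotz y) = Suc (fst (lotz x))"
    if "fst (lotz x) < n"
    using that i hamming_neighbour_ones_zeros_Suc[of i n]
    by (intro bexI[of _ "ones_zeros n (Suc i)"]) (auto simp: pareto_set_lotz lotz_def LO_ones_zeros)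
  show "\<exists>y\<in>pareto_set n lotz. hamming_neighbour x y \<and> Suc (fst (lotz y)) = fst (lotz x)"
    if "0 < fst (lotz x)"
  proof -
    have "0 < i" using that i by (simp add: lotz_def LO_ones_zeros)
    then obtain k where k: "i = Suc k" using gr0_implies_Suc by blast
    show ?thesis
      using i k hamming_neighbour_sym[OF hamming_neighbour_ones_zeros_Suc[of k n]]
      by (intro bexI[of _ "ones_zeros n k"]) (auto simp: pareto_set_lotz lotz_def LO_ones_zeros)
  qed
qed (simp_all add: lotz_def LO_def)

theorem lemma3:
  fixes n :: nat and f :: "bool list \<Rightarrow> nat \<times> nat"
    and score :: "bool list \<Rightarrow> bool list set \<Rightarrow> real"
    and P :: "bool list set" and \<sigma> :: "nat \<Rightarrow> bool list" and r :: "nat \<Rightarrow> real"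
  assumes "f = oneminmax \<or> f = lotz"
    and "diversity_favouring n f (cube n - {replicate n False, replicate n True}) score"
    and "population n f P"
    and "P \<subseteq> pareto_set n f"
    and "bij_betw \<sigma> {1..card P} P"
    and "\<And>i j. 1 \<le> i \<Longrightarrow> i \<le> j \<Longrightarrow> j \<le> card P \<Longrightarrow> score (\<sigma> i) P \<ge> score (\<sigma> j) P"
    and "\<And>i. r i \<ge> 0"
    and "(\<Sum>i\<in>{1..card P}. r i) = 1"
    and "f ` P \<noteq> pareto_front n f"
  shows "(\<Sum>i\<in>{i \<in> {1..card P}. good n f P (\<sigma> i)}. r i) \<ge> Min {r 1, r 2, r 3}"
proof -
  have "graded_pareto_set n f"
    using assms(1) graded_pareto_set_oneminmax graded_pareto_set_lotz by blast
  then obtain x where "x \<in> P" "good n f P x"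
    "x \<notin> {replicate n False, replicate n True} \<or> card P \<le> 3"
    using graded_pareto_set.exists_good assms(3,4,9) by blast
  moreover have "card {replicate n False, replicate n True} < 3"
    by (simp add: card_insert_if)
  ultimately obtain i where i: "i \<in> {1..3}" "i \<le> card P" "good n f P (\<sigma> i)"
    using good_among_top_ranked[OF assms(2) _ _ assms(3-6)] by blast
  then have "Min {r 1, r 2, r 3} \<le> r i"
    by (auto simp: numeral_3_eq_3 numeral_2_eq_2 le_Suc_eq)
  also have "r i \<le> (\<Sum>i\<in>{i \<in> {1..card P}. good n f P (\<sigma> i)}. r i)"
    using i assms(7) by (intro member_le_sum) auto
  finally show ?thesis .
qed

end
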